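(* Let $\gamma_i\in\mathcal{M}_k\otimes\mathcal{M}_k$, $i=1,\dots,n$, be states whose images are not contained in the anti-symmetric subspace of $\mathbb{C}^k\otimes\mathbb{C}^k$. Then: (a) $\gamma_1^\Gamma\otimes\cdots\otimes\gamma_n^\Gamma\ge0$ if and only if $\gamma_i^\Gamma\ge0$ for all $i$; (b) $\mathcal{R}(\gamma_1^\Gamma)\otimes\cdots\otimes\mathcal{R}(\gamma_n^\Gamma)\ge0$ if and only if $\mathcal{R}(\gamma_i^\Gamma)\ge0$ for all $i$; (c) $\mathcal{R}(\gamma_1)\otimes\cdots\otimes\mathcal{R}(\gamma_n)=\gamma_1\otimes\cdots\otimes\gamma_n$ if and only if $\mathcal{R}(\gamma_i)=\gamma_i$ for all $i$.
   Context: $\mathcal{M}_k$ denotes complex $k\times k$ matrices; $\mathcal{M}_k\otimes\mathcal{M}_k\cong\mathcal{M}_{k^2}$ via the Kronecker product. A state is a positive semidefinite Hermitian matrix (not necessarily of trace one). The anti-symmetric subspace of $\mathbb{C}^k\otimes\mathbb{C}^k$ is $\{x: F_kx=-x\}$, where $F_k(v\otimes w)=w\otimes v$ is the flip operator. Partial transpose: $(\sum_iA_i\otimes B_i)^\Gamma=\sum_iA_i\otimes B_i^t$. Realignment on $\mathcal{M}_k\otimes\mathcal{M}_k$: identify $\mathcal{M}_k$ with $\mathbb{C}^k\otimes\mathbb{C}^k$ via $\mathrm{vec}(vw^t)=v\otimes w$ (extended linearly), and set $\mathcal{R}(A\otimes B)=\mathrm{vec}(A)\mathrm{vec}(B)^t$,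 extended linearly. *)

theory Defs
  imports "Jordan_Normal_Form.Matrix"
begin

text \<open>The space C^k (x) C^k is identified with C^(k*k) via the basis index
  (a,b) corresponding to a*k+b (the usual Kronecker convention), and
  M_k (x) M_k with (k*k) x (k*k) matrices accordingly.\<close>

definition kron :: "complex mat \<Rightarrow> complex mat \<Rightarrow> complex mat" where
  "kron A B = mat (dim_row A * dim_row B) (dim_col A * dim_col B)
     (\<lambda>(i,j). A $$ (i div dim_row B, j div dim_col B) * B $$ (i mod dim_row B, j mod dim_col B))"

definition kron_list :: "complex mat list \<Rightarrow> complex mat" where
  "kron_list As = foldr kron As (1\<^sub>m 1)"

definition hermitian_mat :: "complex mat \<Rightarrow> bool" where
  "hermitian_mat A \<longleftrightarrow> A \<in> carrier_mat (dim_row A) (dim_row A) \<and>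
     (\<forall>i<dim_row A. \<forall>j<dim_row A. A $$ (i,j) = cnj (A $$ (j,i)))"

definition psd :: "complex mat \<Rightarrow> bool" where
  "psd A \<longleftrightarrow> hermitian_mat A \<and>
     (\<forall>v\<in>carrier_vec (dim_row A). 0 \<le> Re ((A *\<^sub>v v) \<bullet>c v))"

definition is_state :: "nat \<Rightarrow> complex mat \<Rightarrow> bool" where
  "is_state k A \<longleftrightarrow> A \<in> carrier_mat (k*k) (k*k) \<and> psd A"

definition flip_vec :: "nat \<Rightarrow> complex vec \<Rightarrow> complex vec" where
  "flip_vec k x = vec (k*k) (\<lambda>i. x $ ((i mod k) * k + i div k))"

definition antisym_subspace :: "nat \<Rightarrow> complex vec set" where
  "antisym_subspace k = {x \<in> carrier_vec (k*k). flip_vec k x = - x}"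

definition mat_image :: "complex mat \<Rightarrow> complex vec set" where
  "mat_image A = {A *\<^sub>v x | x. x \<in> carrier_vec (dim_col A)}"

text \<open>Partial transpose on M_k (x) M_k: (sum A_i (x) B_i)^Gamma = sum A_i (x) B_i^t.
  Entry ((a,b),(c,d)) of the result is entry ((a,d),(c,b)) of the argument.\<close>
definition ptrans :: "nat \<Rightarrow> complex mat \<Rightarrow> complex mat" where
  "ptrans k A = mat (k*k) (k*k)
     (\<lambda>(i,j). A $$ ((i div k) * k + j mod k, (j div k) * k + i mod k))"

text \<open>Realignment on M_k (x) M_k, with vec(v w^t) = v (x) w, i.e. vec(A)_(i*k+j) = A_(i,j),
  and R(A (x) B) = vec(A) vec(B)^t.  Entry ((i,j),(l,m)) of R(X) is entry ((i,l),(j,m)) of X.\<close>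
definition realign :: "nat \<Rightarrow> complex mat \<Rightarrow> complex mat" where
  "realign k A = mat (k*k) (k*k)
     (\<lambda>(p,q). A $$ ((p div k) * k + q div k, (p mod k) * k + q mod k))"

end

theory Submission
  imports Defs
begin

text \<open>If kernels \<open>A\<close> and \<open>B\<close> each have a vector with positive expectation value, then
  \<open>A \<otimes> B \<ge> 0\<close> iff \<open>A \<ge> 0\<close> and \<open>B \<ge> 0\<close>: testing \<open>A \<otimes> B\<close> on product vectors \<open>u \<otimes> v\<close>
  with \<open>\<langle>u, A u\<rangle> > 0\<close> gives \<open>B \<ge> 0\<close>, and conversely a Gram factorisation of \<open>B\<close> writes the
  form of \<open>A \<otimes> B\<close> as a sum of forms of \<open>A\<close>. The hypothesis on the image only excludes
  \<open>\<gamma> = 0\<close>, and for a nonzero state \<open>\<gamma>\<close> both \<open>\<gamma>\<^sup>\<Gamma>\<close> and \<open>\<R>(\<gamma>\<^sup>\<Gamma>)\<close> have such a vector: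
  \<open>\<gamma>\<^sup>\<Gamma>\<close> shares the diagonal of \<open>\<gamma>\<close>, and the expectation value of \<open>\<R>(\<gamma>\<^sup>\<Gamma>)\<close> on the maximally
  entangled vector is \<open>tr \<gamma> > 0\<close>.
  For (c), equal tensor products of nonzero factors have proportional factors, so
  \<open>\<R>(\<gamma>\<^sub>1) = c \<gamma>\<^sub>1\<close>; as \<open>\<R>\<close> is an involution \<open>c = \<plusminus>1\<close>, and \<open>c = -1\<close> is impossible since
  \<open>tr \<gamma>\<^sub>1 = c \<langle>\<phi>, \<gamma>\<^sub>1 \<phi>\<rangle>\<close> for the maximally entangled \<open>\<phi>\<close>.\<close>

section \<open>Hermitian forms of kernels\<close>

text \<open>A matrix of size \<open>n\<close> is handled as a kernel \<open>nat \<Rightarrow> nat \<Rightarrow> complex\<close> whose entries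
  outside \<open>{..<n}\<close> are ignored; this keeps dimension bookkeeping out of the linear algebra.\<close>

definition qform :: "nat \<Rightarrow> (nat \<Rightarrow> nat \<Rightarrow> complex) \<Rightarrow> (nat \<Rightarrow> complex) \<Rightarrow> complex" where
  "qform n B v = (\<Sum>i<n. \<Sum>j<n. cnj (v i) * B i j * v j)"

definition psd_kernel :: "nat \<Rightarrow> (nat \<Rightarrow> nat \<Rightarrow> complex) \<Rightarrow> bool" where
  "psd_kernel n B \<longleftrightarrow> (\<forall>i<n. \<forall>j<n. B i j = cnj (B j i)) \<and> (\<forall>v. 0 \<le> Re (qform n B v))"

definition takes_positive_value :: "nat \<Rightarrow> (nat \<Rightarrow> nat \<Rightarrow> complex) \<Rightarrow> bool" where
  "takes_positive_value n B \<longleftrightarrow> (\<exists>u. Im (qform n B u) = 0 \<and> 0 < Re (qform n B u))"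

lemma qform_cong:
  "(\<And>i j. i < n \<Longrightarrow> j < n \<Longrightarrow> B i j = C i j) \<Longrightarrow> (\<And>i. i < n \<Longrightarrow> v i = w i)
    \<Longrightarrow> qform n B v = qform n C w"
  unfolding qform_def by (intro sum.cong) auto

lemma psd_kernel_cong:
  "(\<And>i j. i < n \<Longrightarrow> j < n \<Longrightarrow> B i j = C i j) \<Longrightarrow> psd_kernel n B = psd_kernel n C"
  unfolding psd_kernel_def using qform_cong[of n B C] by auto

lemma takes_positive_value_cong:
  "(\<And>i j. i < n \<Longrightarrow> j < n \<Longrightarrow> B i j = C i j) \<Longrightarrow> takes_positive_value n B = takes_positive_value n C"
  unfolding takes_positive_value_def using qform_cong[of n B C] by auto

lemma qform_unit:
  "i < n \<Longrightarrow> qform n B (\<lambda>p. if p = i then 1 else 0) = B i i"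
  unfolding qform_def
  by (simp add: if_distrib[of "\<lambda>x. x * _"] if_distrib[of "\<lambda>x. _ * x"] if_distrib[of cnj] cong: if_cong)

lemma qform_two_units:
  assumes "i < n" "j < n" "i \<noteq> j"
  shows "qform n B (\<lambda>p. (if p = i then a else 0) + (if p = j then b else 0))
     = cnj a * B i i * a + cnj a * B i j * b + cnj b * B j i * a + cnj b * B j j * b"
  using assms unfolding qform_def
  by (simp add: ring_distribs sum.distrib if_distrib[of "\<lambda>x. x * _"] if_distrib[of "\<lambda>x. _ * x"]
      if_distrib[of cnj] cong: if_cong)

lemma qform_Suc:
  "qform (Suc m) B w = qform m B w + (\<Sum>i<m. cnj (w i) * B i m) * w m
     + cnj (w m) * (\<Sum>j<m. B m j * w j) + cnj (w m) * B m m * w m"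
  unfolding qform_def by (simp add: sum.distrib sum_distrib_left sum_distrib_right algebra_simps)

lemma qform_sum_kernel:
  "qform n (\<lambda>i j. \<Sum>r\<in>R. K r i j) v = (\<Sum>r\<in>R. qform n (K r) v)"
  unfolding qform_def by (simp add: sum_distrib_left sum_distrib_right sum.swap[of _ R])

lemma qform_scaled_kernel: "qform n (\<lambda>i j. c * B i j) v = c * qform n B v"
  unfolding qform_def by (simp add: sum_distrib_left mult_ac)

text \<open>Polarization with the test vectors \<open>e\<^sub>i + e\<^sub>j\<close> and \<open>e\<^sub>i + \<i> e\<^sub>j\<close>.\<close>
lemma hermitian_if_qform_real:
  assumes real: "\<And>v. Im (qform n B v) = 0" and "i < n" "j < n"
  shows "B i j = cnj (B j i)"
proof -
  have diag: "Im (B p p) = 0" if "p < n" for p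
    using real[of "\<lambda>q. if q = p then 1 else 0"] qform_unit[OF that] by simp
  show ?thesis
  proof (cases "i = j")
    case False
    have "Im (B i i + B i j + B j i + B j j) = 0"
      using real[of "\<lambda>p. (if p = i then 1 else 0) + (if p = j then 1 else 0)"]
        qform_two_units[OF \<open>i < n\<close> \<open>j < n\<close> False, of B 1 1] by simp
    moreover have "Im (B i i + B i j * \<i> - \<i> * B j i + B j j) = 0"
      using real[of "\<lambda>p. (if p = i then 1 else 0) + (if p = j then \<i> else 0)"]
        qform_two_units[OF \<open>i < n\<close> \<open>j < n\<close> False, of B 1 \<i>] by simp
    ultimately show ?thesis using diag \<open>i < n\<close> \<open>j < n\<close> by (simp add: complex_eq_iff)
  qed (use diag \<open>i < n\<close> in \<open>simp add: complex_eq_iff\<close>)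
qed

lemma qform_real_if_hermitian:
  assumes "\<And>i j. i < n \<Longrightarrow> j < n \<Longrightarrow> B i j = cnj (B j i)"
  shows "Im (qform n B v) = 0"
proof -
  have "cnj (qform n B v) = (\<Sum>i<n. \<Sum>j<n. v i * cnj (B i j) * cnj (v j))"
    unfolding qform_def by (simp add: mult.commute)
  also have "\<dots> = (\<Sum>i<n. \<Sum>j<n. v i * B j i * cnj (v j))"
    using assms by (intro sum.cong refl) (metis complex_cnj_cnj lessThan_iff)
  also have "\<dots> = qform n B v"
    unfolding qform_def by (subst sum.swap) (simp add: mult_ac)
  finally show ?thesis by (simp add: complex_eq_iff)
qed

lemma psd_kernelI:
  "(\<And>v. Im (qform n B v) = 0 \<and> 0 \<le> Re (qform n B v)) \<Longrightarrow> psd_kernel n B"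
  unfolding psd_kernel_def using hermitian_if_qform_real by blast

lemma psd_kernel_hermitian: "psd_kernel n B \<Longrightarrow> i < n \<Longrightarrow> j < n \<Longrightarrow> B i j = cnj (B j i)"
  unfolding psd_kernel_def by blast

lemma psd_kernel_qform: "psd_kernel n B \<Longrightarrow> Im (qform n B v) = 0 \<and> 0 \<le> Re (qform n B v)"
  unfolding psd_kernel_def using qform_real_if_hermitian[of n B v] by blast

lemma psd_kernel_diag:
  assumes "psd_kernel n B" "i < n"
  shows "Im (B i i) = 0" "0 \<le> Re (B i i)"
  using psd_kernel_qform[OF assms(1), of "\<lambda>p. if p = i then 1 else 0"] qform_unit[OF assms(2)] by auto

lemma psd_kernel_row_zero:
  assumes B: "psd_kernel n B" and "a < n" "b < n" and "B a a = 0"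
  shows "B a b = 0"
proof (rule ccontr)
  assume nz: "B a b \<noteq> 0"
  then have "a \<noteq> b" using \<open>B a a = 0\<close> by auto
  define z where "z = B a b"
  define q where "q = (Re z)\<^sup>2 + (Im z)\<^sup>2"
  have "q > 0" using nz unfolding q_def z_def by (simp add: complex_eq_iff sum_power2_gt_zero_iff)
  define r where "r = (Re (B b b) + 1) / (2 * q)"
  define w where "w p = (if p = a then - of_real r * z else 0) + (if p = b then 1 else 0)" for p
  have "B b a = cnj z" using psd_kernel_hermitian[OF B \<open>b < n\<close> \<open>a < n\<close>] unfolding z_def by simp
  then have "Re (qform n B w) = Re (cnj (- of_real r * z) * z + cnj z * (- of_real r * z) + B b b)"
    using qform_two_units[OF \<open>a < n\<close> \<open>b < n\<close> \<open>a \<noteq> b\<close>] \<open>B a a = 0\<close> unfolding w_def z_def by simp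
  also have "Re \<dots> = - 2 * r * q + Re (B b b)"
    unfolding q_def by (simp add: algebra_simps power2_eq_square)
  also have "\<dots> = -1" unfolding r_def using \<open>q > 0\<close> by (simp add: field_simps)
  finally show False using psd_kernel_qform[OF B, of w] by simp
qed

lemma psd_kernel_Suc_leading: "psd_kernel (Suc m) B \<Longrightarrow> psd_kernel m B"
proof (rule psd_kernelI)
  fix v assume "psd_kernel (Suc m) B"
  moreover have "qform (Suc m) B (v(m := 0)) = qform m B v"
    by (simp add: qform_Suc qform_cong[of m B B "v(m := 0)" v])
  ultimately show "Im (qform m B v) = 0 \<and> 0 \<le> Re (qform m B v)"
    using psd_kernel_qform by metis
qed

lemma psd_kernel_pivot_identity:
  assumes B: "psd_kernel (Suc m) B" and "i < Suc m" "j < Suc m" and "i = m \<or> j = m"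
  shows "B i j = B i m * B m j / B m m"
proof (cases "B m m = 0")
  case True
  have "B m p = 0" "B p m = 0" if "p < Suc m" for p
    using psd_kernel_row_zero[OF B _ that True] psd_kernel_hermitian[OF B that, of m] by simp_all
  then show ?thesis using assms by auto
qed (use assms in auto)

text \<open>The Schur complement of the last diagonal entry; for \<open>B m m = 0\<close> the junk value
  \<open>x / 0 = 0\<close> makes it the leading block.\<close>
lemma psd_kernel_schur_complement:
  assumes B: "psd_kernel (Suc m) B"
  shows "psd_kernel m (\<lambda>i j. B i j - B i m * B m j / B m m)"
proof (cases "B m m = 0")
  case True
  then show ?thesis using psd_kernel_Suc_leading[OF B] by simp
next
  case False
  define a where "a = B m m"
  have "Im a = 0" "0 \<le> Re a" using psd_kernel_diag[OF B, of m] unfolding a_def by auto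
  then have cnj_a: "cnj a = a" by (simp add: complex_eq_iff)
  have herm: "B i m = cnj (B m i)" if "i < m" for i using psd_kernel_hermitian[OF B, of i m] that by simp
  show ?thesis
  proof (rule psd_kernelI)
    fix v
    define S where "S = (\<Sum>j<m. B m j * v j)"
    have col: "(\<Sum>i<m. cnj (v i) * B i m) = cnj S"
      unfolding S_def by (simp add: herm mult.commute)
    have "qform m (\<lambda>i j. B i j - B i m * B m j / B m m) v
        = qform m B v - (\<Sum>i<m. cnj (v i) * B i m) * (\<Sum>j<m. B m j * v j) / a"
    proof -
      have "(\<Sum>i<m. \<Sum>j<m. cnj (v i) * (B i m * B m j / a) * v j)
          = (\<Sum>i<m. cnj (v i) * B i m) * (\<Sum>j<m. B m j * v j) / a"
        unfolding sum_product sum_divide_distrib by (simp add: mult_ac)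
      then show ?thesis
        unfolding qform_def a_def by (simp add: right_diff_distrib left_diff_distrib sum_subtractf)
    qed
    also have "\<dots> = qform m B v - cnj S * S / a" unfolding col S_def ..
    also have "\<dots> = qform (Suc m) B (v(m := - S / a))"
    proof -
      have "(\<Sum>i<m. cnj ((v(m := - S / a)) i) * B i m) = cnj S"
        unfolding col[symmetric] by (rule sum.cong) auto
      moreover have "(\<Sum>j<m. B m j * (v(m := - S / a)) j) = S"
        unfolding S_def by (rule sum.cong) auto
      ultimately show ?thesis
        using False cnj_a by (simp add: qform_Suc qform_cong[of m B B "v(m := _)" v] a_def field_simps)
    qed
    finally show "Im (qform m (\<lambda>i j. B i j - B i m * B m j / B m m) v) = 0 \<and>
        0 \<le> Re (qform m (\<lambda>i j. B i j - B i m * B m j / B m m) v)"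
      using psd_kernel_qform[OF B] by simp
  qed
qed

lemma psd_kernel_gram:
  "psd_kernel m B \<Longrightarrow> \<exists>b. \<forall>i<m. \<forall>j<m. B i j = (\<Sum>r<m. b r i * cnj (b r j))"
proof (induction m arbitrary: B)
  case (Suc m)
  define s where "s = sqrt (Re (B m m))"
  have "Im (B m m) = 0" "0 \<le> Re (B m m)" using psd_kernel_diag[OF Suc.prems, of m] by auto
  then have ss: "of_real s * of_real s = B m m" unfolding s_def
    by (simp add: complex_eq_iff flip: of_real_mult)
  obtain b where b: "\<forall>i<m. \<forall>j<m. B i j - B i m * B m j / B m m = (\<Sum>r<m. b r i * cnj (b r j))"
    using Suc.IH[OF psd_kernel_schur_complement[OF Suc.prems]] by blast
  define c where "c r i = (if r < m then (if i < m then b r i else 0) else B i m / of_real s)" for r i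
  have "B i j = (\<Sum>r<Suc m. c r i * cnj (c r j))" if "i < Suc m" "j < Suc m" for i j
  proof -
    have last: "c m i * cnj (c m j) = B i m * B m j / B m m"
      using psd_kernel_hermitian[OF Suc.prems \<open>j < Suc m\<close>, of m] ss unfolding c_def
      by (simp add: field_simps)
    show ?thesis
    proof (cases "i < m \<and> j < m")
      case True
      then show ?thesis using b last unfolding c_def by (simp add: algebra_simps)
    next
      case False
      then show ?thesis using psd_kernel_pivot_identity[OF Suc.prems that] that last
        unfolding c_def by auto
    qed
  qed
  then show ?case by blast
qed simp

section \<open>Kronecker products of kernels\<close>

lemma sum_lessThan_mult_nat: "(\<Sum>p<n * m. h p) = (\<Sum>i<n. \<Sum>j<m. h (i * m + j :: nat))"
  by (simp add: sum.nat_group[symmetric] sum.atLeastLessThan_shift_0 atLeast0LessThan comp_def add.commute)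

lemma mult_add_less_mult_nat:
  fixes i j n m :: nat
  assumes "i < n" "j < m"
  shows "i * m + j < n * m"
proof -
  have "i * m + j < Suc i * m" using \<open>j < m\<close> by simp
  also have "\<dots> \<le> n * m" using \<open>i < n\<close> by (intro mult_right_mono) auto
  finally show ?thesis .
qed

lemma div_mod_less_of_less_mult: "p < n * (m::nat) \<Longrightarrow> p div m < n \<and> p mod m < m"
  by (cases "m = 0") (auto simp: less_mult_imp_div_less)

definition kron_kernel ::
    "nat \<Rightarrow> (nat \<Rightarrow> nat \<Rightarrow> complex) \<Rightarrow> (nat \<Rightarrow> nat \<Rightarrow> complex) \<Rightarrow> nat \<Rightarrow> nat \<Rightarrow> complex" where
  "kron_kernel m A B p q = A (p div m) (q div m) * B (p mod m) (q mod m)"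

lemma qform_kron_kernel:
  "qform (n * m) (kron_kernel m A B) x
    = (\<Sum>i<n. \<Sum>j<m. \<Sum>i'<n. \<Sum>j'<m. cnj (x (i * m + j)) * A i i' * B j j' * x (i' * m + j'))"
  unfolding qform_def kron_kernel_def sum_lessThan_mult_nat by (intro sum.cong refl) simp

lemma qform_kron_kernel_product_vector:
  "qform (n * m) (kron_kernel m A B) (\<lambda>p. u (p div m) * w (p mod m)) = qform n A u * qform m B w"
proof -
  have "qform (n * m) (kron_kernel m A B) (\<lambda>p. u (p div m) * w (p mod m))
      = (\<Sum>i<n. \<Sum>j<m. \<Sum>i'<n. \<Sum>j'<m. (cnj (u i) * A i i' * u i') * (cnj (w j) * B j j' * w j'))"
    unfolding qform_kron_kernel by (intro sum.cong refl) (simp add: mult_ac)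
  also have "\<dots> = qform n A u * qform m B w"
    unfolding qform_def sum_product ..
  finally show ?thesis .
qed

lemma qform_kron_kernel_rank_one:
  "qform (n * m) (kron_kernel m A (\<lambda>j j'. b j * cnj (b j'))) x
    = qform n A (\<lambda>i. \<Sum>j<m. cnj (b j) * x (i * m + j))"
proof -
  have "qform (n * m) (kron_kernel m A (\<lambda>j j'. b j * cnj (b j'))) x
      = (\<Sum>i<n. \<Sum>j<m. \<Sum>i'<n. \<Sum>j'<m. (b j * cnj (x (i * m + j))) * A i i' * (cnj (b j') * x (i' * m + j')))"
    unfolding qform_kron_kernel by (intro sum.cong refl) (simp add: mult_ac)
  also have "\<dots> = (\<Sum>i<n. \<Sum>i'<n. \<Sum>j<m. \<Sum>j'<m. (b j * cnj (x (i * m + j))) * A i i' * (cnj (b j') * x (i' * m + j')))"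
    by (rule sum.cong[OF refl], rule sum.swap)
  also have "\<dots> = qform n A (\<lambda>i. \<Sum>j<m. cnj (b j) * x (i * m + j))"
  proof -
    have "(\<Sum>j\<in>J. f j) * c * (\<Sum>j'\<in>J'. g j') = (\<Sum>j\<in>J. \<Sum>j'\<in>J'. f j * c * g j')"
      for f g :: "nat \<Rightarrow> complex" and c J J'
      by (simp only: sum_distrib_left sum_distrib_right) (rule sum.swap)
    then show ?thesis unfolding qform_def by simp
  qed
  finally show ?thesis .
qed

lemma psd_kernel_kron:
  assumes A: "psd_kernel n A" and B: "psd_kernel m B"
  shows "psd_kernel (n * m) (kron_kernel m A B)"
proof -
  obtain b where b: "\<forall>j<m. \<forall>j'<m. B j j' = (\<Sum>r<m. b r j * cnj (b r j'))"
    using psd_kernel_gram[OF B] by blast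
  have "kron_kernel m A B p q = (\<Sum>r<m. kron_kernel m A (\<lambda>j j'. b r j * cnj (b r j')) p q)"
    if "p < n * m" "q < n * m" for p q
    using that b div_mod_less_of_less_mult unfolding kron_kernel_def by (simp add: sum_distrib_left)
  then have "qform (n * m) (kron_kernel m A B) x
      = (\<Sum>r<m. qform n A (\<lambda>i. \<Sum>j<m. cnj (b r j) * x (i * m + j)))" for x
    by (simp add: qform_cong[of "n * m" _ "\<lambda>p q. \<Sum>r<m. _ r p q"] qform_sum_kernel
        qform_kron_kernel_rank_one)
  then show ?thesis
    by (intro psd_kernelI) (simp add: psd_kernel_qform[OF A] sum_nonneg)
qed

lemma real_nonneg_of_mult:
  assumes "Im a = 0" "0 < Re a" "Im (a * z) = 0" "0 \<le> Re (a * z)"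
  shows "Im z = 0 \<and> 0 \<le> Re z"
  using assms by (simp add: zero_le_mult_iff)

lemma psd_kernel_kron_iff:
  assumes A: "takes_positive_value n A" and B: "takes_positive_value m B"
  shows "psd_kernel (n * m) (kron_kernel m A B) \<longleftrightarrow> psd_kernel n A \<and> psd_kernel m B"
proof
  assume K: "psd_kernel (n * m) (kron_kernel m A B)"
  obtain u where u: "Im (qform n A u) = 0" "0 < Re (qform n A u)"
    using A unfolding takes_positive_value_def by blast
  obtain w where w: "Im (qform m B w) = 0" "0 < Re (qform m B w)"
    using B unfolding takes_positive_value_def by blast
  have "psd_kernel m B"
  proof (rule psd_kernelI)
    fix v
    show "Im (qform m B v) = 0 \<and> 0 \<le> Re (qform m B v)"
      using psd_kernel_qform[OF K, of "\<lambda>p. u (p div m) * v (p mod m)"] u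
      by (intro real_nonneg_of_mult[of "qform n A u"]) (simp_all only: qform_kron_kernel_product_vector)
  qed
  moreover have "psd_kernel n A"
  proof (rule psd_kernelI)
    fix v
    show "Im (qform n A v) = 0 \<and> 0 \<le> Re (qform n A v)"
      using psd_kernel_qform[OF K, of "\<lambda>p. v (p div m) * w (p mod m)"] w
      by (intro real_nonneg_of_mult[of "qform m B w"])
        (simp_all only: qform_kron_kernel_product_vector mult.commute[of "qform n A v"])
  qed
  ultimately show "psd_kernel n A \<and> psd_kernel m B" by blast
qed (use psd_kernel_kron in blast)

lemma takes_positive_value_kron:
  assumes "takes_positive_value n A" "takes_positive_value m B"
  shows "takes_positive_value (n * m) (kron_kernel m A B)"
proof -
  obtain u w where "Im (qform n A u) = 0" "0 < Re (qform n A u)" "Im (qform m B w) = 0" "0 < Re (qform m B w)"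
    using assms unfolding takes_positive_value_def by blast
  then show ?thesis unfolding takes_positive_value_def
    by (intro exI[of _ "\<lambda>p. u (p div m) * w (p mod m)"]) (simp add: qform_kron_kernel_product_vector)
qed

definition mat_kernel :: "complex mat \<Rightarrow> nat \<Rightarrow> nat \<Rightarrow> complex" where
  "mat_kernel A i j = A $$ (i, j)"

lemma qform_mat_kernel:
  assumes "A \<in> carrier_mat n n" "v \<in> carrier_vec n"
  shows "(A *\<^sub>v v) \<bullet>c v = qform n (mat_kernel A) (\<lambda>i. v $ i)"
proof -
  have "(A *\<^sub>v v) \<bullet>c v = (\<Sum>i<n. (\<Sum>j<n. A $$ (i, j) * v $ j) * cnj (v $ i))"
    using assms unfolding scalar_prod_def mult_mat_vec_def row_def by (simp add: atLeast0LessThan)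
  then show ?thesis
    unfolding qform_def mat_kernel_def sum_distrib_right by (simp add: mult_ac)
qed

lemma psd_iff_psd_kernel:
  assumes A: "A \<in> carrier_mat n n"
  shows "psd A \<longleftrightarrow> psd_kernel n (mat_kernel A)"
proof -
  have "(\<forall>v\<in>carrier_vec n. 0 \<le> Re ((A *\<^sub>v v) \<bullet>c v)) \<longleftrightarrow> (\<forall>v. 0 \<le> Re (qform n (mat_kernel A) v))"
  proof
    assume nonneg: "\<forall>v\<in>carrier_vec n. 0 \<le> Re ((A *\<^sub>v v) \<bullet>c v)"
    show "\<forall>v. 0 \<le> Re (qform n (mat_kernel A) v)"
    proof
      fix v
      have "qform n (mat_kernel A) v = (A *\<^sub>v vec n v) \<bullet>c vec n v"
        unfolding qform_mat_kernel[OF A vec_carrier] by (rule qform_cong) auto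
      then show "0 \<le> Re (qform n (mat_kernel A) v)" using nonneg by simp
    qed
  qed (simp add: qform_mat_kernel[OF A])
  then show ?thesis
    using A unfolding psd_def psd_kernel_def hermitian_mat_def mat_kernel_def by auto
qed

lemma nonzero_mat_entry:
  fixes A :: "'a :: zero mat"
  shows "A \<in> carrier_mat n m \<Longrightarrow> A \<noteq> 0\<^sub>m n m \<Longrightarrow> \<exists>i<n. \<exists>j<m. A $$ (i, j) \<noteq> 0"
proof (rule ccontr)
  assume "A \<in> carrier_mat n m" "A \<noteq> 0\<^sub>m n m" "\<not> (\<exists>i<n. \<exists>j<m. A $$ (i, j) \<noteq> 0)"
  then show False using eq_matI[of "0\<^sub>m n m" A] by auto
qed

lemma smult_one_mat: "1 \<cdot>\<^sub>m (A :: 'a :: monoid_mult mat) = A"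
  by (rule eq_matI) auto

lemma kron_carrier: "A \<in> carrier_mat n n' \<Longrightarrow> B \<in> carrier_mat m m' \<Longrightarrow> kron A B \<in> carrier_mat (n * m) (n' * m')"
  unfolding kron_def by auto

lemma index_kron:
  "A \<in> carrier_mat n n' \<Longrightarrow> B \<in> carrier_mat m m' \<Longrightarrow> i < n \<Longrightarrow> j < n' \<Longrightarrow> r < m \<Longrightarrow> s < m' \<Longrightarrow>
   kron A B $$ (i * m + r, j * m' + s) = A $$ (i, j) * B $$ (r, s)"
  unfolding kron_def using mult_add_less_mult_nat[of i n r m] mult_add_less_mult_nat[of j n' s m'] by auto

lemma mat_kernel_kron:
  "A \<in> carrier_mat n n \<Longrightarrow> B \<in> carrier_mat m m \<Longrightarrow> p < n * m \<Longrightarrow> q < n * m \<Longrightarrow>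
   mat_kernel (kron A B) p q = kron_kernel m (mat_kernel A) (mat_kernel B) p q"
  unfolding kron_def mat_kernel_def kron_kernel_def by auto

lemma kron_smult_left:
  assumes "A \<in> carrier_mat n n" "B \<in> carrier_mat m m"
  shows "kron (c \<cdot>\<^sub>m A) B = c \<cdot>\<^sub>m kron A B"
  by (rule eq_matI) (use assms div_mod_less_of_less_mult in \<open>auto simp: kron_def\<close>)

lemma kron_nonzero:
  assumes A: "A \<in> carrier_mat n n" "A \<noteq> 0\<^sub>m n n" and B: "B \<in> carrier_mat m m" "B \<noteq> 0\<^sub>m m m"
  shows "kron A B \<noteq> 0\<^sub>m (n * m) (n * m)"
proof
  assume "kron A B = 0\<^sub>m (n * m) (n * m)"
  moreover obtain i j where "i < n" "j < n" "A $$ (i, j) \<noteq> 0" using nonzero_mat_entry[OF A] by blast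
  moreover obtain r s where "r < m" "s < m" "B $$ (r, s) \<noteq> 0" using nonzero_mat_entry[OF B] by blast
  ultimately show False
    using index_kron[OF A(1) B(1), of i j r s] mult_add_less_mult_nat[of i n r m] mult_add_less_mult_nat[of j n s m]
    by simp
qed

lemma kron_eq_kron_imp_proportional:
  assumes A: "A \<in> carrier_mat n n" and B: "B \<in> carrier_mat n n"
    and X: "X \<in> carrier_mat m m" and Y: "Y \<in> carrier_mat m m"
    and eq: "kron A X = kron B Y" and "A \<noteq> 0\<^sub>m n n" and "X \<noteq> 0\<^sub>m m m"
  shows "\<exists>c. B = c \<cdot>\<^sub>m A \<and> X = c \<cdot>\<^sub>m Y"
proof -
  obtain i0 j0 where ij: "i0 < n" "j0 < n" "A $$ (i0, j0) \<noteq> 0" using nonzero_mat_entry[OF A] assms by blast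
  obtain r0 s0 where rs: "r0 < m" "s0 < m" "X $$ (r0, s0) \<noteq> 0" using nonzero_mat_entry[OF X] assms by blast
  have e: "A $$ (i, j) * X $$ (r, s) = B $$ (i, j) * Y $$ (r, s)"
    if "i < n" "j < n" "r < m" "s < m" for i j r s
    using index_kron[OF A X that] index_kron[OF B Y that] eq by simp
  define c where "c = B $$ (i0, j0) / A $$ (i0, j0)"
  have Xc: "X $$ (r, s) = c * Y $$ (r, s)" if "r < m" "s < m" for r s
    using e[OF ij(1,2) that] ij(3) unfolding c_def by (simp add: field_simps)
  have "Y $$ (r0, s0) \<noteq> 0" using Xc[OF rs(1,2)] rs(3) by auto
  then have "B $$ (i, j) = c * A $$ (i, j)" if "i < n" "j < n" for i j
    using e[OF that rs(1,2)] Xc[OF rs(1,2)] by (simp add: field_simps)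
  then have "B = c \<cdot>\<^sub>m A" by (intro eq_matI) (use A B in auto)
  moreover have "X = c \<cdot>\<^sub>m Y" using Xc by (intro eq_matI) (use X Y in auto)
  ultimately show ?thesis by blast
qed

lemma kron_list_Cons: "kron_list (M # Ms) = kron M (kron_list Ms)"
  unfolding kron_list_def by simp

lemma kron_list_carrier:
  "\<forall>M\<in>set Ms. M \<in> carrier_mat d d \<Longrightarrow> kron_list Ms \<in> carrier_mat (d ^ length Ms) (d ^ length Ms)"
  by (induction Ms) (auto simp: kron_list_def kron_list_Cons intro: kron_carrier)

lemma kron_list_nonzero:
  "\<forall>M\<in>set Ms. M \<in> carrier_mat d d \<and> M \<noteq> 0\<^sub>m d d \<Longrightarrow> kron_list Ms \<noteq> 0\<^sub>m (d ^ length Ms) (d ^ length Ms)"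
proof (induction Ms)
  case Nil
  have "(1\<^sub>m 1 :: complex mat) $$ (0, 0) \<noteq> 0\<^sub>m 1 1 $$ (0, 0)" by simp
  then show ?case unfolding kron_list_def by (metis foldr_Nil id_apply list.size(3) power_0)
next
  case (Cons M Ms)
  then show ?case
    using kron_nonzero[of M d "kron_list Ms" "d ^ length Ms"] kron_list_carrier[of Ms d]
    by (simp add: kron_list_Cons)
qed

lemma takes_positive_value_kron_list:
  "\<forall>M\<in>set Ms. M \<in> carrier_mat d d \<and> takes_positive_value d (mat_kernel M)
    \<Longrightarrow> takes_positive_value (d ^ length Ms) (mat_kernel (kron_list Ms))"
proof (induction Ms)
  case Nil
  show ?case unfolding kron_list_def takes_positive_value_def qform_def mat_kernel_def
    by (intro exI[of _ "\<lambda>_. 1"]) simp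
next
  case (Cons M Ms)
  let ?D = "d ^ length Ms"
  have M: "M \<in> carrier_mat d d" "takes_positive_value d (mat_kernel M)" using Cons.prems by auto
  have K: "kron_list Ms \<in> carrier_mat ?D ?D" using kron_list_carrier[of Ms d] Cons.prems by auto
  have "takes_positive_value (d * ?D) (kron_kernel ?D (mat_kernel M) (mat_kernel (kron_list Ms)))"
    using takes_positive_value_kron[OF M(2)] Cons by simp
  moreover have "takes_positive_value (d * ?D) (mat_kernel (kron M (kron_list Ms)))
      = takes_positive_value (d * ?D) (kron_kernel ?D (mat_kernel M) (mat_kernel (kron_list Ms)))"
    by (rule takes_positive_value_cong) (rule mat_kernel_kron[OF M(1) K])
  ultimately show ?case by (simp add: kron_list_Cons)
qed

lemma psd_kron_list_iff:
  assumes "\<forall>M\<in>set Ms. M \<in> carrier_mat d d \<and> takes_positive_value d (mat_kernel M)"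
  shows "psd (kron_list Ms) \<longleftrightarrow> (\<forall>M\<in>set Ms. psd M)"
  using assms
proof (induction Ms)
  case Nil
  have "psd_kernel 1 (mat_kernel (1\<^sub>m 1))" unfolding psd_kernel_def qform_def mat_kernel_def by simp
  then show ?case using psd_iff_psd_kernel[of "1\<^sub>m 1" 1] by (simp add: kron_list_def)
next
  case (Cons M Ms)
  let ?D = "d ^ length Ms"
  have M: "M \<in> carrier_mat d d" "takes_positive_value d (mat_kernel M)" using Cons.prems by auto
  have K: "kron_list Ms \<in> carrier_mat ?D ?D" using kron_list_carrier[of Ms d] Cons.prems by auto
  have "psd (kron M (kron_list Ms)) \<longleftrightarrow> psd_kernel (d * ?D) (kron_kernel ?D (mat_kernel M) (mat_kernel (kron_list Ms)))"
    unfolding psd_iff_psd_kernel[OF kron_carrier[OF M(1) K]]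
    by (rule psd_kernel_cong) (rule mat_kernel_kron[OF M(1) K])
  also have "\<dots> \<longleftrightarrow> psd M \<and> psd (kron_list Ms)"
    using psd_kernel_kron_iff[OF M(2) takes_positive_value_kron_list] Cons.prems
      psd_iff_psd_kernel[OF M(1)] psd_iff_psd_kernel[OF K] by simp
  finally show ?case using Cons by (simp add: kron_list_Cons)
qed

section \<open>States, partial transpose and realignment\<close>

lemma mat_image_zero_subset_antisym_subspace: "mat_image (0\<^sub>m (k * k) (k * k)) \<subseteq> antisym_subspace k"
proof -
  have "flip_vec k (0\<^sub>v (k * k)) = - 0\<^sub>v (k * k)"
  proof (rule eq_vecI)
    fix i assume "i < dim_vec (- 0\<^sub>v (k * k) :: complex vec)"
    then have "i < k * k" "i mod k * k + i div k < k * k"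
      using div_mod_less_of_less_mult[of i k k] mult_add_less_mult_nat[of "i mod k" k "i div k" k] by auto
    then show "flip_vec k (0\<^sub>v (k * k)) $ i = (- 0\<^sub>v (k * k)) $ i" unfolding flip_vec_def by simp
  qed (simp add: flip_vec_def)
  moreover have "0\<^sub>m (k * k) (k * k) *\<^sub>v x = 0\<^sub>v (k * k)" if "x \<in> carrier_vec (k * k)" for x :: "complex vec"
    by (rule eq_vecI) (use that in \<open>auto simp: mult_mat_vec_def scalar_prod_def\<close>)
  ultimately show ?thesis unfolding mat_image_def antisym_subspace_def by auto
qed

lemma psd_kernel_pos_diag:
  assumes B: "psd_kernel n B" and "i < n" "j < n" "B i j \<noteq> 0"
  shows "\<exists>a<n. Im (B a a) = 0 \<and> 0 < Re (B a a)"
proof -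
  have "B i i \<noteq> 0" using psd_kernel_row_zero[OF B] assms by blast
  then have "0 < Re (B i i)" using psd_kernel_diag[OF B \<open>i < n\<close>] by (simp add: complex_eq_iff)
  then show ?thesis using psd_kernel_diag[OF B \<open>i < n\<close>] \<open>i < n\<close> by blast
qed

lemma psd_kernel_trace_pos:
  assumes B: "psd_kernel n B" and "a < n" "0 < Re (B a a)"
  shows "Im (\<Sum>p<n. B p p) = 0 \<and> 0 < Re (\<Sum>p<n. B p p)"
proof -
  have "Re (B a a) \<le> (\<Sum>p<n. Re (B p p))"
    by (rule member_le_sum) (use assms psd_kernel_diag[OF B] in auto)
  then show ?thesis using assms psd_kernel_diag[OF B] by simp
qed

lemma state_pos_diag:
  assumes "is_state k g" "g \<noteq> 0\<^sub>m (k * k) (k * k)"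
  shows "\<exists>a<k * k. Im (g $$ (a, a)) = 0 \<and> 0 < Re (g $$ (a, a))"
proof -
  have g: "g \<in> carrier_mat (k * k) (k * k)" "psd_kernel (k * k) (mat_kernel g)"
    using assms(1) psd_iff_psd_kernel unfolding is_state_def by blast+
  obtain i j where "i < k * k" "j < k * k" "g $$ (i, j) \<noteq> 0" using nonzero_mat_entry[OF g(1) assms(2)] by blast
  then show ?thesis using psd_kernel_pos_diag[OF g(2)] unfolding mat_kernel_def by blast
qed

lemma state_trace_pos:
  assumes "is_state k g" "g \<noteq> 0\<^sub>m (k * k) (k * k)"
  shows "Im (\<Sum>p<k * k. g $$ (p, p)) = 0 \<and> 0 < Re (\<Sum>p<k * k. g $$ (p, p))"
proof -
  have "psd_kernel (k * k) (mat_kernel g)" using assms(1) psd_iff_psd_kernel unfolding is_state_def by blast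
  then show ?thesis
    using state_pos_diag[OF assms] psd_kernel_trace_pos[of "k * k" "mat_kernel g"] unfolding mat_kernel_def by blast
qed

lemma ptrans_diag: "a < k * k \<Longrightarrow> ptrans k A $$ (a, a) = A $$ (a, a)"
  unfolding ptrans_def by simp

lemma ptrans_carrier: "ptrans k A \<in> carrier_mat (k * k) (k * k)"
  unfolding ptrans_def by simp

lemma realign_carrier: "realign k A \<in> carrier_mat (k * k) (k * k)"
  unfolding realign_def by simp

lemma realign_index_less:
  fixes p q k :: nat
  assumes "p < k * k" "q < k * k"
  shows "p div k * k + q div k < k * k \<and> p mod k * k + q mod k < k * k"
  using assms div_mod_less_of_less_mult[of p k k] div_mod_less_of_less_mult[of q k k] mult_add_less_mult_nat
  by blast

lemma realign_realign:
  assumes "A \<in> carrier_mat (k * k) (k * k)"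
  shows "realign k (realign k A) = A"
proof (rule eq_matI)
  fix p q assume "p < dim_row A" "q < dim_col A"
  then have "p < k * k" "q < k * k" using assms by auto
  moreover have "k > 0" using \<open>p < k * k\<close> by (cases k) auto
  ultimately show "realign k (realign k A) $$ (p, q) = A $$ (p, q)"
    using realign_index_less[of p k q] div_mod_less_of_less_mult[of p k k] div_mod_less_of_less_mult[of q k k]
    unfolding realign_def by simp
qed (use assms in \<open>auto simp: realign_def\<close>)

lemma realign_smult:
  assumes "A \<in> carrier_mat (k * k) (k * k)"
  shows "realign k (c \<cdot>\<^sub>m A) = c \<cdot>\<^sub>m realign k A"
  by (rule eq_matI) (use assms realign_index_less in \<open>auto simp: realign_def\<close>)

lemma realign_nonzero:
  assumes "A \<in> carrier_mat (k * k) (k * k)" "A \<noteq> 0\<^sub>m (k * k) (k * k)"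
  shows "realign k A \<noteq> 0\<^sub>m (k * k) (k * k)"
proof
  assume "realign k A = 0\<^sub>m (k * k) (k * k)"
  moreover have "realign k (0\<^sub>m (k * k) (k * k)) = 0\<^sub>m (k * k) (k * k)"
    by (rule eq_matI) (use realign_index_less in \<open>auto simp: realign_def\<close>)
  ultimately show False using realign_realign[OF assms(1)] assms(2) by simp
qed

text \<open>The unnormalised maximally entangled vector \<open>\<Sum>\<^sub>i e\<^sub>i \<otimes> e\<^sub>i\<close>; realignment turns its
  expectation value into the trace.\<close>
definition max_entangled :: "nat \<Rightarrow> nat \<Rightarrow> complex" where
  "max_entangled k p = (if p div k = p mod k then 1 else 0)"

lemma qform_max_entangled:
  "qform (k * k) K (max_entangled k) = (\<Sum>i<k. \<Sum>l<k. K (i * k + i) (l * k + l))"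
proof -
  have "qform (k * k) K (max_entangled k)
      = (\<Sum>i<k. \<Sum>j<k. \<Sum>l<k. \<Sum>m<k. of_bool (i = j) * K (i * k + j) (l * k + m) * of_bool (l = m))"
    unfolding qform_def max_entangled_def sum_lessThan_mult_nat by (intro sum.cong refl) simp
  also have "\<dots> = (\<Sum>i<k. \<Sum>l<k. K (i * k + i) (l * k + l))"
    by (simp add: of_bool_def if_distrib[of "\<lambda>x. x * _"] if_distrib[of "\<lambda>x. _ * x"] sum.delta'
        cong: if_cong) (rule sum.cong[OF refl], subst sum.swap, simp)
  finally show ?thesis .
qed

lemma qform_realign_max_entangled:
  "qform (k * k) (mat_kernel (realign k A)) (max_entangled k) = (\<Sum>p<k * k. A $$ (p, p))"
  unfolding qform_max_entangled sum_lessThan_mult_nat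
  by (intro sum.cong refl) (simp add: realign_def mat_kernel_def mult_add_less_mult_nat)

lemma takes_positive_value_ptrans:
  assumes "is_state k g" "g \<noteq> 0\<^sub>m (k * k) (k * k)"
  shows "takes_positive_value (k * k) (mat_kernel (ptrans k g))"
proof -
  obtain a where "a < k * k" "Im (g $$ (a, a)) = 0" "0 < Re (g $$ (a, a))" using state_pos_diag[OF assms] by blast
  then show ?thesis unfolding takes_positive_value_def
    by (intro exI[of _ "\<lambda>p. if p = a then 1 else 0"]) (simp add: qform_unit mat_kernel_def ptrans_diag)
qed

lemma takes_positive_value_realign_ptrans:
  assumes "is_state k g" "g \<noteq> 0\<^sub>m (k * k) (k * k)"
  shows "takes_positive_value (k * k) (mat_kernel (realign k (ptrans k g)))"
  unfolding takes_positive_value_def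
  using state_trace_pos[OF assms]
  by (intro exI[of _ "max_entangled k"]) (simp add: qform_realign_max_entangled ptrans_diag)

text \<open>For \<open>c = -1\<close> the positive trace would equal minus a nonnegative expectation value.\<close>
lemma realign_eigenvalue_state:
  assumes st: "is_state k g" and nz: "g \<noteq> 0\<^sub>m (k * k) (k * k)" and eig: "realign k g = c \<cdot>\<^sub>m g"
  shows "c = 1"
proof -
  have g: "g \<in> carrier_mat (k * k) (k * k)" "psd_kernel (k * k) (mat_kernel g)"
    using st psd_iff_psd_kernel unfolding is_state_def by blast+
  have "g = realign k (realign k g)" using realign_realign[OF g(1)] by simp
  also have "\<dots> = c \<cdot>\<^sub>m (c \<cdot>\<^sub>m g)" unfolding eig realign_smult[OF g(1)] eig ..
  finally have gcc: "g = c \<cdot>\<^sub>m (c \<cdot>\<^sub>m g)" .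
  obtain i j where "i < k * k" "j < k * k" "g $$ (i, j) \<noteq> 0" using nonzero_mat_entry[OF g(1) nz] by blast
  moreover have "g $$ (i, j) = c * (c * g $$ (i, j))"
    using arg_cong[OF gcc, of "\<lambda>M. M $$ (i, j)"] g(1) \<open>i < k * k\<close> \<open>j < k * k\<close> by simp
  ultimately have "c * c = 1" by (simp add: mult.assoc[symmetric])
  then have "c = 1 \<or> c = -1" by (simp add: square_eq_1_iff)
  moreover have "(\<Sum>p<k * k. g $$ (p, p)) = c * qform (k * k) (mat_kernel g) (max_entangled k)"
  proof -
    have "qform (k * k) (mat_kernel (c \<cdot>\<^sub>m g)) (max_entangled k)
        = qform (k * k) (\<lambda>i j. c * mat_kernel g i j) (max_entangled k)"
      using g(1) by (intro qform_cong) (auto simp: mat_kernel_def)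
    then show ?thesis using qform_realign_max_entangled[of k g] unfolding eig qform_scaled_kernel by simp
  qed
  ultimately show ?thesis using state_trace_pos[OF st nz] psd_kernel_qform[OF g(2), of "max_entangled k"] by auto
qed

lemma kron_list_realign_eq_smult:
  "\<forall>g\<in>set gs. is_state k g \<and> g \<noteq> 0\<^sub>m (k * k) (k * k) \<Longrightarrow>
   kron_list (map (realign k) gs) = c \<cdot>\<^sub>m kron_list gs \<Longrightarrow> c = 1 \<and> (\<forall>g\<in>set gs. realign k g = g)"
proof (induction gs arbitrary: c)
  case Nil
  then have "(1\<^sub>m 1 :: complex mat) $$ (0, 0) = (c \<cdot>\<^sub>m 1\<^sub>m 1) $$ (0, 0)" unfolding kron_list_def by simp
  then show ?case by simp
next
  case (Cons g gs)
  let ?D = "(k * k) ^ length gs"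
  have g: "is_state k g" "g \<in> carrier_mat (k * k) (k * k)" "g \<noteq> 0\<^sub>m (k * k) (k * k)"
    using Cons.prems unfolding is_state_def by auto
  have gs: "\<forall>h\<in>set gs. is_state k h \<and> h \<noteq> 0\<^sub>m (k * k) (k * k)" using Cons.prems by auto
  then have K: "kron_list gs \<in> carrier_mat ?D ?D"
    using kron_list_carrier[of gs "k * k"] unfolding is_state_def by auto
  have KR: "kron_list (map (realign k) gs) \<in> carrier_mat ?D ?D" "kron_list (map (realign k) gs) \<noteq> 0\<^sub>m ?D ?D"
    using kron_list_carrier[of "map (realign k) gs" "k * k"] kron_list_nonzero[of "map (realign k) gs" "k * k"]
      realign_carrier realign_nonzero gs unfolding is_state_def by auto
  have "kron (realign k g) (kron_list (map (realign k) gs)) = kron (c \<cdot>\<^sub>m g) (kron_list gs)"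
    using Cons.prems(2) kron_smult_left[OF g(2) K] by (simp add: kron_list_Cons)
  from kron_eq_kron_imp_proportional[OF realign_carrier smult_carrier_mat[OF g(2)] KR(1) K this
      realign_nonzero[OF g(2,3)] KR(2)]
  obtain r where "c \<cdot>\<^sub>m g = r \<cdot>\<^sub>m realign k g" "kron_list (map (realign k) gs) = r \<cdot>\<^sub>m kron_list gs"
    by blast
  moreover from this Cons.IH[OF gs] have "r = 1" and gs_fixed: "\<forall>h\<in>set gs. realign k h = h" by auto
  ultimately have eig: "realign k g = c \<cdot>\<^sub>m g" by (simp add: smult_one_mat)
  then have "c = 1" by (rule realign_eigenvalue_state[OF g(1,3)])
  with eig gs_fixed show ?case by (simp add: smult_one_mat)
qed

theorem mainTheorem15:
  fixes k :: nat and gs :: "complex mat list"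
  assumes "gs \<noteq> []"
    and "\<forall>g\<in>set gs. is_state k g"
    and "\<forall>g\<in>set gs. \<not> (mat_image g \<subseteq> antisym_subspace k)"
  shows "(psd (kron_list (map (ptrans k) gs)) \<longleftrightarrow> (\<forall>g\<in>set gs. psd (ptrans k g)))
       \<and> (psd (kron_list (map (\<lambda>g. realign k (ptrans k g)) gs))
            \<longleftrightarrow> (\<forall>g\<in>set gs. psd (realign k (ptrans k g))))
       \<and> (kron_list (map (realign k) gs) = kron_list gs
            \<longleftrightarrow> (\<forall>g\<in>set gs. realign k g = g))"
proof -
  have states: "\<forall>g\<in>set gs. is_state k g \<and> g \<noteq> 0\<^sub>m (k * k) (k * k)"
    using assms(2,3) mat_image_zero_subset_antisym_subspace by blast
  have "psd (kron_list (map (ptrans k) gs)) \<longleftrightarrow> (\<forall>g\<in>set gs. psd (ptrans k g))"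
    using psd_kron_list_iff[of "map (ptrans k) gs" "k * k"] states ptrans_carrier takes_positive_value_ptrans
    by auto
  moreover have "psd (kron_list (map (\<lambda>g. realign k (ptrans k g)) gs))
      \<longleftrightarrow> (\<forall>g\<in>set gs. psd (realign k (ptrans k g)))"
    using psd_kron_list_iff[of "map (\<lambda>g. realign k (ptrans k g)) gs" "k * k"] states realign_carrier
      takes_positive_value_realign_ptrans by auto
  moreover have "kron_list (map (realign k) gs) = kron_list gs \<longleftrightarrow> (\<forall>g\<in>set gs. realign k g = g)"
    using kron_list_realign_eq_smult[OF states, of 1] by (auto simp: smult_one_mat map_idI)
  ultimately show ?thesis by blast
qed

end
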